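(* Let $\vec G=(G,\alpha,w)$ be a finite magnetic graph with vertex set $V$, let $V_0\subseteq V$ and let $V_1\subsetneq V_0$ be a proper subset (the distinguished vertices). Then for any two different $s$-partitions $A$ and $B$ of a natural number $r\ge 4$, the $V_1$-contracted $A$-union $\vec F_{A,V_1}$ and $V_1$-contracted $B$-union $\vec F_{B,V_1}$ of the frame $(F_a(\vec G,V_0))_{a\in\mathbb{N}}$ are isospectral and not isomorphic.
   Context: A graph $G=(V,E,\partial)$: finite disjoint sets $V,E$, incidence $\partial e=(\partial_-e,\partial_+e)$, inversion $e\mapsto\bar e$ ($\bar{\bar e}=e$, $\bar e\ne e$, $\partial_\pm\bar e=\partial_\mp e$); loops/multiple edges allowed; $E_v=\{e:\partial_-e=v\}$, $\deg v=|E_v|>0$. A magnetic graph $\vec G=(G,\alpha,w)$ has $w:E\to(0,\infty)$, $w_{\bar e}=w_e$, and $\alpha:E\to\mathbb{R}/2\pi\mathbb{Z}$, $\alpha_{\bar e}=-\alpha_e$; $\deg^wv=\sum_{e\in E_v}w_e$. The magnetic Laplacian on $\ell^2(V,\deg^w)$ is $(\Delta f)(v)=f(v)-\frac1{\deg^wv}\sum_{e\in E_v}w_ee^{i\alpha_e}f(\partial_+e)$; two magnetic graphs are isospectral if their Laplacians have the same eigenvalues with the same multiplicities, and isomorphic if there is a graph isomorphism (bijections on vertices and edges commuting with incidence and inversion) preserving $w$ and $\alpha$. Contraction of vertices along an equivalence relation keeps all edges (with weights and potentials) and replaces vertices by classes. Frame member: $G^a$ is the disjoint union of $a$ copies $G\times\{j\}$;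 with $(v,i)\sim(v',j)$ iff $(v,i)=(v',j)$ or ($v=v'\in V_0$), $F_a(\vec G,V_0)=G^a/\!\sim$ with $w_{(e,j)}=w_e$, $\alpha_{(e,j)}=\alpha_e$. An $s$-partition of $r$ is a multiset $A=\{\!\{a_1,\dots,a_s\}\!\}$ of natural numbers with sum $r$. $\vec F_A=\bigsqcup_{i=1}^sF_{a_i}(\vec G,V_0)\times\{i\}$, and $\vec F_{A,V_1}$ is obtained from $\vec F_A$ by contracting, for each $v_1\in V_1$, the $s$ vertices $([v_1],i)$, $i=1,\dots,s$, into one vertex. *)

theory Defs
  imports Complex_Main "HOL-Library.Multiset"
begin

text \<open>The potential is stored as a real number and is only meaningful modulo 2 pi.\<close>

record ('v, 'e) mgraph =
  verts :: "'v set"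
  edges :: "'e set"
  src   :: "'e \<Rightarrow> 'v"
  tgt   :: "'e \<Rightarrow> 'v"
  inve  :: "'e \<Rightarrow> 'e"
  wt    :: "'e \<Rightarrow> real"
  pot   :: "'e \<Rightarrow> real"

definition cong2pi :: "real \<Rightarrow> real \<Rightarrow> bool" where
  "cong2pi x y \<longleftrightarrow> (\<exists>k::int. x = y + 2 * pi * of_int k)"

definition out_edges :: "('v, 'e) mgraph \<Rightarrow> 'v \<Rightarrow> 'e set" where
  "out_edges G v = {e \<in> edges G. src G e = v}"

definition magnetic_graph :: "('v, 'e) mgraph \<Rightarrow> bool" where
  "magnetic_graph G \<longleftrightarrow>
     finite (verts G) \<and> finite (edges G) \<and>
     (\<forall>e \<in> edges G. src G e \<in> verts G \<and> tgt G e \<in> verts G \<and>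
        inve G e \<in> edges G \<and> inve G (inve G e) = e \<and> inve G e \<noteq> e \<and>
        src G (inve G e) = tgt G e \<and> tgt G (inve G e) = src G e \<and>
        wt G e > 0 \<and> wt G (inve G e) = wt G e \<and>
        cong2pi (pot G (inve G e)) (- pot G e)) \<and>
     (\<forall>v \<in> verts G. out_edges G v \<noteq> {})"

definition wdeg :: "('v, 'e) mgraph \<Rightarrow> 'v \<Rightarrow> real" where
  "wdeg G v = (\<Sum>e \<in> out_edges G v. wt G e)"

definition mag_laplacian :: "('v, 'e) mgraph \<Rightarrow> ('v \<Rightarrow> complex) \<Rightarrow> 'v \<Rightarrow> complex" where
  "mag_laplacian G f v = f v - complex_of_real (1 / wdeg G v) *
      (\<Sum>e \<in> out_edges G v. complex_of_real (wt G e) * cis (pot G e) * f (tgt G e))"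

definition is_eigenfunction :: "('v, 'e) mgraph \<Rightarrow> complex \<Rightarrow> ('v \<Rightarrow> complex) \<Rightarrow> bool" where
  "is_eigenfunction G \<mu> f \<longleftrightarrow>
     (\<forall>v. v \<notin> verts G \<longrightarrow> f v = 0) \<and>
     (\<forall>v \<in> verts G. mag_laplacian G f v = \<mu> * f v)"

definition lin_indep_fam :: "nat \<Rightarrow> (nat \<Rightarrow> 'v \<Rightarrow> complex) \<Rightarrow> bool" where
  "lin_indep_fam n f \<longleftrightarrow>
     (\<forall>c :: nat \<Rightarrow> complex. (\<forall>v. (\<Sum>i<n. c i * f i v) = 0) \<longrightarrow> (\<forall>i<n. c i = 0))"

definition eig_mult :: "('v, 'e) mgraph \<Rightarrow> complex \<Rightarrow> nat" where
  "eig_mult G \<mu> = Max {n. \<exists>f. (\<forall>i<n. is_eigenfunction G \<mu> (f i)) \<and> lin_indep_fam n f}"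

definition isospectral :: "('v, 'e) mgraph \<Rightarrow> ('w, 'f) mgraph \<Rightarrow> bool" where
  "isospectral G H \<longleftrightarrow> (\<forall>\<mu>. eig_mult G \<mu> = eig_mult H \<mu>)"

definition mg_isomorphic :: "('v, 'e) mgraph \<Rightarrow> ('w, 'f) mgraph \<Rightarrow> bool" where
  "mg_isomorphic G H \<longleftrightarrow>
     (\<exists>\<phi> \<psi>. bij_betw \<phi> (verts G) (verts H) \<and> bij_betw \<psi> (edges G) (edges H) \<and>
        (\<forall>e \<in> edges G. src H (\<psi> e) = \<phi> (src G e) \<and> tgt H (\<psi> e) = \<phi> (tgt G e) \<and>
           \<psi> (inve G e) = inve H (\<psi> e) \<and> wt H (\<psi> e) = wt G e \<and>
           cong2pi (pot H (\<psi> e)) (pot G e)))"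

definition contract :: "('v, 'e) mgraph \<Rightarrow> 'v rel \<Rightarrow> ('v set, 'e) mgraph" where
  "contract G R = \<lparr> verts = verts G // R, edges = edges G,
      src = (\<lambda>e. R `` {src G e}), tgt = (\<lambda>e. R `` {tgt G e}),
      inve = inve G, wt = wt G, pot = pot G \<rparr>"

definition disj_union :: "('v, 'e) mgraph list \<Rightarrow> ('v \<times> nat, 'e \<times> nat) mgraph" where
  "disj_union Gs = \<lparr>
      verts = (\<Union>i \<in> {1..length Gs}. verts (Gs ! (i - 1)) \<times> {i}),
      edges = (\<Union>i \<in> {1..length Gs}. edges (Gs ! (i - 1)) \<times> {i}),
      src = (\<lambda>(e, i). (src (Gs ! (i - 1)) e, i)),
      tgt = (\<lambda>(e, i). (tgt (Gs ! (i - 1)) e, i)),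
      inve = (\<lambda>(e, i). (inve (Gs ! (i - 1)) e, i)),
      wt = (\<lambda>(e, i). wt (Gs ! (i - 1)) e),
      pot = (\<lambda>(e, i). pot (Gs ! (i - 1)) e) \<rparr>"

definition copies :: "nat \<Rightarrow> ('v, 'e) mgraph \<Rightarrow> ('v \<times> nat, 'e \<times> nat) mgraph" where
  "copies a G = disj_union (replicate a G)"

definition frame_rel :: "('v, 'e) mgraph \<Rightarrow> 'v set \<Rightarrow> nat \<Rightarrow> ('v \<times> nat) rel" where
  "frame_rel G V0 a = {((v, i), (v', j)).
      v \<in> verts G \<and> v' \<in> verts G \<and> i \<in> {1..a} \<and> j \<in> {1..a} \<and>
      ((v, i) = (v', j) \<or> (v = v' \<and> v \<in> V0))}"

definition frame :: "('v, 'e) mgraph \<Rightarrow> 'v set \<Rightarrow> nat \<Rightarrow> (('v \<times> nat) set, 'e \<times> nat) mgraph" where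
  "frame G V0 a = contract (copies a G) (frame_rel G V0 a)"

definition is_partition :: "nat \<Rightarrow> nat \<Rightarrow> nat multiset \<Rightarrow> bool" where
  "is_partition s r A \<longleftrightarrow> 0 \<notin># A \<and> size A = s \<and> sum_mset A = r"

text \<open>A-union F_A: disjoint union of F_{a_i}(G,V0) x {i}, i = 1..s, where
  a_1,...,a_s is an enumeration (here: the sorted one) of A.\<close>
definition frame_union :: "('v, 'e) mgraph \<Rightarrow> 'v set \<Rightarrow> nat multiset \<Rightarrow>
    (('v \<times> nat) set \<times> nat, ('e \<times> nat) \<times> nat) mgraph" where
  "frame_union G V0 A = disj_union (map (frame G V0) (sorted_list_of_multiset A))"

text \<open>V1-contracted A-union: for each v1 in V1, the s vertices ([v1], i) are merged;
  [v1] is the class of (v1, 1), i.e. the class containing (v1, 1).\<close>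
definition contr_rel :: "(('v \<times> nat) set \<times> nat, 'f) mgraph \<Rightarrow> 'v set \<Rightarrow>
    (('v \<times> nat) set \<times> nat) rel" where
  "contr_rel F V1 = {(x, y). x \<in> verts F \<and> y \<in> verts F \<and>
      (x = y \<or> (\<exists>v1 \<in> V1. (v1, 1) \<in> fst x \<and> (v1, 1) \<in> fst y))}"

definition contracted_union :: "('v, 'e) mgraph \<Rightarrow> 'v set \<Rightarrow> 'v set \<Rightarrow> nat multiset \<Rightarrow>
    ((('v \<times> nat) set \<times> nat) set, ('e \<times> nat) \<times> nat) mgraph" where
  "contracted_union G V0 V1 A =
     (let F = frame_union G V0 A in contract F (contr_rel F V1))"

end

theory Submission
  imports Defs
begin

(* The vertices of the V1-contracted A-union are the classes of the copies (v, i, j) of the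
   vertices v of G, indexed by the cells (i, j), j <= a_i, of the partition A = {a_1, ..., a_s}.
   At such a vertex the magnetic Laplacian is the average, over the cells identified with
   (i, j), of the Laplacian of G applied cellwise.  So an eigenfunction for mu amounts to one
   function on the cells for each v, constant on the identified cells, whose eigen-defects sum
   to zero over each class of identified cells.  These classes are singletons, blocks or all
   cells, hence a linear bijection between functions on the cells of A and of B that respects
   constants, blockwise constants, zero total sums and zero block sums carries eigenfunctions
   of one union injectively to the other.  Such a bijection exists because on both sides these
   conditions split the functions into pieces of dimensions 1, s - 1 and r - s.

   The unions are not isomorphic because their degree multisets differ: each v in V0 - V1
   yields vertices of degrees x * deg v for the parts x of the partition, and all other vertices
   yield the same degrees for A and B.  The largest part times the largest such degree is the
   largest of these degrees, so the parts can be peeled off one at a time. *)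

section \<open>Cells of a partition and the transfer map\<close>

type_synonym cell = "nat \<times> nat"

datatype vertex_kind = Unshared | Framed | Glued

definition kind_of :: "'v set \<Rightarrow> 'v set \<Rightarrow> 'v \<Rightarrow> vertex_kind" where
  "kind_of V0 V1 v = (if v \<in> V1 then Glued else if v \<in> V0 then Framed else Unshared)"

(* The cell (i, j) stands for the j-th copy of G in the i-th frame member.  In the contracted
   union, the copy of a vertex v in cell c is identified with its copies in the cells of
   cell_class (kind_of V0 V1 v) a s c. *)
definition cells :: "(nat \<Rightarrow> nat) \<Rightarrow> nat \<Rightarrow> cell set" where
  "cells a s = (SIGMA i:{1..s}. {1..a i})"

definition block :: "(nat \<Rightarrow> nat) \<Rightarrow> nat \<Rightarrow> cell set" where
  "block a i = {i} \<times> {1..a i}"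

definition inner_cells :: "(nat \<Rightarrow> nat) \<Rightarrow> nat \<Rightarrow> cell set" where
  "inner_cells a s = (SIGMA i:{1..s}. {1..<a i})"

fun cell_class :: "vertex_kind \<Rightarrow> (nat \<Rightarrow> nat) \<Rightarrow> nat \<Rightarrow> cell \<Rightarrow> cell set" where
  "cell_class Unshared a s c = {c}"
| "cell_class Framed a s c = block a (fst c)"
| "cell_class Glued a s c = cells a s"

lemma mem_cells: "(i, j) \<in> cells a s \<longleftrightarrow> i \<in> {1..s} \<and> j \<in> {1..a i}"
  by (simp add: cells_def)

lemma finite_cells [simp]: "finite (cells a s)"
  by (simp add: cells_def)

lemma card_cells: "card (cells a s) = (\<Sum>i=1..s. a i)"
  by (simp add: cells_def card_SigmaI)

lemma sum_block: "(\<Sum>c\<in>block a i. f c) = (\<Sum>j=1..a i. f (i, j))"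
proof -
  have "block a i = Pair i ` {1..a i}"
    by (auto simp: block_def)
  then show ?thesis
    by (simp add: sum.reindex inj_on_def)
qed

lemma sum_cells: "(\<Sum>c\<in>cells a s. f c) = (\<Sum>i=1..s. \<Sum>c\<in>block a i. f c)"
  by (simp add: cells_def sum.Sigma sum_block)

lemma card_block [simp]: "card (block a i) = a i"
  by (simp add: block_def)

lemma block_subset_cells: "i \<in> {1..s} \<Longrightarrow> block a i \<subseteq> cells a s"
  by (auto simp: block_def cells_def)

lemma inner_cells_subset_cells: "inner_cells a s \<subseteq> cells a s"
  by (auto simp: inner_cells_def cells_def)

lemma card_inner_cells:
  assumes "\<And>i. i \<in> {1..s} \<Longrightarrow> a i > 0"
  shows "card (inner_cells a s) + s = (\<Sum>i=1..s. a i)"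
proof -
  have "card (inner_cells a s) + s = (\<Sum>i=1..s. a i - 1) + (\<Sum>i=1..s. 1)"
    by (simp add: inner_cells_def card_SigmaI)
  also have "\<dots> = (\<Sum>i=1..s. (a i - 1) + 1)"
    by (simp only: sum.distrib)
  also have "\<dots> = (\<Sum>i=1..s. a i)"
    using assms by (intro sum.cong) auto
  finally show ?thesis .
qed

lemma cell_class_subset_cells: "c \<in> cells a s \<Longrightarrow> cell_class k a s c \<subseteq> cells a s"
  by (cases k) (auto simp: cells_def block_def)

lemma cell_class_self: "c \<in> cells a s \<Longrightarrow> c \<in> cell_class k a s c"
  by (cases k) (auto simp: cells_def block_def)

lemma cell_class_eq:
  "c \<in> cells a s \<Longrightarrow> c' \<in> cell_class k a s c \<Longrightarrow> cell_class k a s c' = cell_class k a s c"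
  by (cases k) (auto simp: block_def)

definition mean_on :: "'a set \<Rightarrow> ('a \<Rightarrow> complex) \<Rightarrow> complex" where
  "mean_on S x = (\<Sum>c\<in>S. x c) / of_nat (card S)"

definition block_dev :: "(nat \<Rightarrow> nat) \<Rightarrow> (cell \<Rightarrow> complex) \<Rightarrow> cell \<Rightarrow> complex" where
  "block_dev a x c = x c - mean_on (block a (fst c)) x"

definition dev_transfer ::
    "(nat \<Rightarrow> nat) \<Rightarrow> (cell \<Rightarrow> cell) \<Rightarrow> (cell \<Rightarrow> complex) \<Rightarrow> cell \<Rightarrow> complex" where
  "dev_transfer b \<sigma> y c =
     (if snd c < b (fst c) then y (\<sigma> c) else - (\<Sum>j\<in>{1..<b (fst c)}. y (\<sigma> (fst c, j))))"

(* The total mean of x, its block means relative to the total mean, and its deviations from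
   the block means are transported separately.  The deviations are determined by their values
   on the inner cells, which are matched by sigma; the last cell of each block of b takes minus
   the sum of the others. *)
definition cell_transfer :: "(nat \<Rightarrow> nat) \<Rightarrow> (nat \<Rightarrow> nat) \<Rightarrow> nat \<Rightarrow> (cell \<Rightarrow> cell) \<Rightarrow>
    (cell \<Rightarrow> complex) \<Rightarrow> cell \<Rightarrow> complex" where
  "cell_transfer a b s \<sigma> x c =
     mean_on (cells a s) x
     + of_nat (a (fst c)) / of_nat (b (fst c)) * (mean_on (block a (fst c)) x - mean_on (cells a s) x)
     + dev_transfer b \<sigma> (block_dev a x) c"

lemma mean_on_lin: "mean_on S (\<lambda>c. \<alpha> * x c + \<beta> * y c) = \<alpha> * mean_on S x + \<beta> * mean_on S y"
  by (simp add: mean_on_def sum.distrib sum_distrib_left add_divide_distrib)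

lemma block_dev_lin:
  "block_dev a (\<lambda>c. \<alpha> * x c + \<beta> * y c) c = \<alpha> * block_dev a x c + \<beta> * block_dev a y c"
  by (simp add: block_dev_def mean_on_lin algebra_simps)

lemma dev_transfer_lin:
  "dev_transfer b \<sigma> (\<lambda>c. \<alpha> * y c + \<beta> * z c) c = \<alpha> * dev_transfer b \<sigma> y c + \<beta> * dev_transfer b \<sigma> z c"
  by (simp add: dev_transfer_def sum.distrib sum_distrib_left)

lemma cell_transfer_lin:
  "cell_transfer a b s \<sigma> (\<lambda>c. \<alpha> * x c + \<beta> * y c) c =
     \<alpha> * cell_transfer a b s \<sigma> x c + \<beta> * cell_transfer a b s \<sigma> y c"
proof -
  have "block_dev a (\<lambda>c. \<alpha> * x c + \<beta> * y c) = (\<lambda>c. \<alpha> * block_dev a x c + \<beta> * block_dev a y c)"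
    by (rule ext) (rule block_dev_lin)
  then show ?thesis
    by (simp add: cell_transfer_def mean_on_lin dev_transfer_lin algebra_simps)
qed

lemma cell_transfer_lincomb:
  assumes "finite K"
  shows "cell_transfer a b s \<sigma> (\<lambda>c. \<Sum>k\<in>K. \<alpha> k * x k c) c' =
    (\<Sum>k\<in>K. \<alpha> k * cell_transfer a b s \<sigma> (x k) c')"
  using assms
proof (induction K rule: finite_induct)
  case empty
  show ?case
    using cell_transfer_lin [of a b s \<sigma> 0 "\<lambda>c. 0" 0 "\<lambda>c. 0" c'] by simp
next
  case (insert k K)
  then show ?case
    using cell_transfer_lin [of a b s \<sigma> "\<alpha> k" "x k" 1 "\<lambda>c. \<Sum>k\<in>K. \<alpha> k * x k c" c'] by simp
qed

lemma block_dev_sum: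
  assumes "a i > 0"
  shows "(\<Sum>c\<in>block a i. block_dev a x c) = 0"
proof -
  have "(\<Sum>c\<in>block a i. block_dev a x c) = (\<Sum>c\<in>block a i. x c - mean_on (block a i) x)"
    by (intro sum.cong) (auto simp: block_dev_def block_def)
  also have "\<dots> = 0"
    using assms by (simp add: sum_subtractf mean_on_def block_def)
  finally show ?thesis .
qed

lemma dev_transfer_sum:
  assumes "b i > 0"
  shows "(\<Sum>c\<in>block b i. dev_transfer b \<sigma> y c) = 0"
proof -
  have "{1..b i} = insert (b i) {1..<b i}"
    using assms by auto
  then show ?thesis
    by (simp add: sum_block dev_transfer_def)
qed

lemma block_dev_eq_zero:
  assumes inner: "\<forall>c\<in>inner_cells a s. block_dev a x c = 0" and c: "c \<in> cells a s"
  shows "block_dev a x c = 0"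
proof -
  obtain i j where ij: "c = (i, j)" "i \<in> {1..s}" "j \<in> {1..a i}"
    using c by (cases c) (auto simp: mem_cells)
  show ?thesis
  proof (cases "j < a i")
    case True
    then show ?thesis
      using inner ij by (auto simp: inner_cells_def)
  next
    case False
    then have "j = a i" "a i > 0"
      using ij by auto
    moreover have "{1..a i} = insert (a i) {1..<a i}"
      using \<open>a i > 0\<close> by auto
    ultimately show ?thesis
      using block_dev_sum [of a i x] inner ij by (simp add: sum_block inner_cells_def)
  qed
qed

lemma block_dev_eq_zero_if_block_const:
  assumes "a (fst c) > 0" and "\<forall>c'\<in>block a (fst c). x c' = x c"
  shows "block_dev a x c = 0"
proof -
  have "(\<Sum>c'\<in>block a (fst c). x c') = (\<Sum>c'\<in>block a (fst c). x c)"
    using assms(2) by (intro sum.cong) blast+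
  then show ?thesis
    using assms(1) by (simp add: block_dev_def mean_on_def)
qed

locale block_transfer =
  fixes a b :: "nat \<Rightarrow> nat" and s :: nat and \<sigma> :: "cell \<Rightarrow> cell"
  assumes a_pos: "\<And>i. i \<in> {1..s} \<Longrightarrow> a i > 0"
    and b_pos: "\<And>i. i \<in> {1..s} \<Longrightarrow> b i > 0"
    and same_total: "(\<Sum>i=1..s. a i) = (\<Sum>i=1..s. b i)"
    and inner_bij: "bij_betw \<sigma> (inner_cells b s) (inner_cells a s)"
begin

abbreviation transfer :: "(cell \<Rightarrow> complex) \<Rightarrow> cell \<Rightarrow> complex" where
  "transfer \<equiv> cell_transfer a b s \<sigma>"

lemma card_cells_eq: "card (cells b s) = card (cells a s)"
  unfolding card_cells same_total ..

lemma block_sum_transfer: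
  assumes i: "i \<in> {1..s}"
  shows "(\<Sum>c\<in>block b i. transfer x c) =
    of_nat (b i) * mean_on (cells a s) x + (\<Sum>c\<in>block a i. x c) - of_nat (a i) * mean_on (cells a s) x"
proof -
  let ?m = "mean_on (cells a s) x"
  have "(\<Sum>c\<in>block b i. transfer x c) =
      (\<Sum>c\<in>block b i. ?m + of_nat (a i) / of_nat (b i) * (mean_on (block a i) x - ?m)
         + dev_transfer b \<sigma> (block_dev a x) c)"
    by (intro sum.cong) (auto simp: cell_transfer_def block_def)
  also have "\<dots> = of_nat (b i) * (?m + of_nat (a i) / of_nat (b i) * (mean_on (block a i) x - ?m))"
    using dev_transfer_sum [of b i \<sigma>, OF b_pos [OF i]] by (simp add: sum.distrib)
  also have "\<dots> = of_nat (b i) * ?m + (\<Sum>c\<in>block a i. x c) - of_nat (a i) * ?m"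
    using a_pos [OF i] b_pos [OF i] by (simp add: mean_on_def field_simps)
  finally show ?thesis .
qed

lemma sum_transfer: "(\<Sum>c\<in>cells b s. transfer x c) = (\<Sum>c\<in>cells a s. x c)"
proof -
  let ?m = "mean_on (cells a s) x"
  have "(\<Sum>c\<in>cells b s. transfer x c) =
      (\<Sum>i=1..s. of_nat (b i) * ?m + (\<Sum>c\<in>block a i. x c) - of_nat (a i) * ?m)"
    unfolding sum_cells by (intro sum.cong) (auto simp: block_sum_transfer)
  also have "\<dots> = of_nat (\<Sum>i=1..s. b i) * ?m + (\<Sum>c\<in>cells a s. x c) - of_nat (\<Sum>i=1..s. a i) * ?m"
    by (simp add: sum.distrib sum_subtractf sum_cells sum_distrib_right)
  finally show ?thesis
    unfolding same_total by simp
qed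

lemma dev_transfer_eq_zero:
  assumes "\<forall>c\<in>inner_cells a s. y c = 0" and c: "c \<in> cells b s"
  shows "dev_transfer b \<sigma> y c = 0"
proof -
  have "y (\<sigma> c') = 0" if "c' \<in> inner_cells b s" for c'
    using assms(1) bij_betw_apply [OF inner_bij that] by blast
  moreover have "(fst c, j) \<in> inner_cells b s" if "j \<in> {1..<b (fst c)}" for j
    using c that by (auto simp: inner_cells_def cells_def)
  moreover have "c \<in> inner_cells b s" if "snd c < b (fst c)"
    using c that by (auto simp: inner_cells_def cells_def)
  ultimately show ?thesis
    by (simp add: dev_transfer_def)
qed

lemma transfer_blockwise_const:
  assumes "\<forall>c\<in>cells a s. block_dev a x c = 0" and "c \<in> cells b s"
  shows "transfer x c = mean_on (cells a s) x
     + of_nat (a (fst c)) / of_nat (b (fst c)) * (mean_on (block a (fst c)) x - mean_on (cells a s) x)"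
  using dev_transfer_eq_zero [of "block_dev a x" c] assms inner_cells_subset_cells
  by (auto simp: cell_transfer_def)

lemma transfer_const:
  assumes x: "\<forall>c\<in>cells a s. x c = z" and c: "c \<in> cells b s"
  shows "transfer x c = z"
proof -
  have "card (cells a s) > 0"
    using c card_cells_eq by (metis card_gt_0_iff empty_iff finite_cells)
  moreover have "(\<Sum>c\<in>cells a s. x c) = (\<Sum>c\<in>cells a s. z)"
    using x by (intro sum.cong) auto
  ultimately have m: "mean_on (cells a s) x = z"
    by (simp add: mean_on_def del: card_0_eq)
  have i: "fst c \<in> {1..s}"
    using c by (auto simp: cells_def)
  have block_mean: "mean_on (block a i) x = z" if "i \<in> {1..s}" for i
  proof -
    have "(\<Sum>c\<in>block a i. x c) = (\<Sum>c\<in>block a i. z)"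
      using x block_subset_cells [OF that] by (intro sum.cong) auto
    then show ?thesis
      using a_pos [OF that] by (simp add: mean_on_def)
  qed
  then have "\<forall>c\<in>cells a s. block_dev a x c = 0"
    using x by (auto simp: block_dev_def cells_def)
  then show ?thesis
    using transfer_blockwise_const [OF _ c] m block_mean [OF i] by simp
qed

lemma cells_nonempty_iff: "cells b s \<noteq> {} \<longleftrightarrow> cells a s \<noteq> {}"
  using card_cells_eq by (metis card_0_eq finite_cells)

lemma transfer_eq_zero_imp:
  assumes Tx: "\<forall>c\<in>cells b s. transfer x c = 0" and c: "c \<in> cells a s"
  shows "x c = 0"
proof -
  have "(\<Sum>c\<in>cells a s. x c) = 0"
    using sum_transfer [of x] Tx by simp
  then have m: "mean_on (cells a s) x = 0"
    by (simp add: mean_on_def)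
  have block_mean: "mean_on (block a i) x = 0" if i: "i \<in> {1..s}" for i
  proof -
    have "(\<Sum>c\<in>block b i. transfer x c) = 0"
      using Tx block_subset_cells [OF i] by (intro sum.neutral) auto
    then have "(\<Sum>c\<in>block a i. x c) = 0"
      using block_sum_transfer [OF i, of x] m by simp
    then show ?thesis
      by (simp add: mean_on_def)
  qed
  have "block_dev a x c' = 0" if c': "c' \<in> inner_cells a s" for c'
  proof -
    have "c' \<in> \<sigma> ` inner_cells b s"
      using c' bij_betw_imp_surj_on [OF inner_bij] by simp
    then obtain c0 where c0: "c0 \<in> inner_cells b s" "\<sigma> c0 = c'"
      by blast
    then have "c0 \<in> cells b s" "snd c0 < b (fst c0)" "fst c0 \<in> {1..s}"
      using inner_cells_subset_cells by (auto simp: inner_cells_def)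
    then have "transfer x c0 = block_dev a x c'"
      using m block_mean c0 by (simp add: cell_transfer_def dev_transfer_def)
    then show ?thesis
      using Tx \<open>c0 \<in> cells b s\<close> by simp
  qed
  then have "block_dev a x c = 0"
    using block_dev_eq_zero c by blast
  moreover have "fst c \<in> {1..s}"
    using c by (auto simp: cells_def)
  ultimately show ?thesis
    using block_mean by (simp add: block_dev_def)
qed

lemma transfer_class_const:
  assumes x: "\<forall>c\<in>cells a s. \<forall>c'\<in>cell_class k a s c. x c' = x c"
  shows "\<forall>c\<in>cells b s. \<forall>c'\<in>cell_class k b s c. transfer x c' = transfer x c"
proof (cases k)
  case Unshared
  then show ?thesis
    by simp
next
  case Framed
  have dev: "\<forall>c\<in>cells a s. block_dev a x c = 0"
  proof
    fix c
    assume c: "c \<in> cells a s"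
    have "\<forall>c'\<in>block a (fst c). x c' = x c"
      using bspec [OF x c] Framed by (metis cell_class.simps(2))
    then show "block_dev a x c = 0"
      using a_pos c by (intro block_dev_eq_zero_if_block_const) (auto simp: cells_def)
  qed
  show ?thesis
  proof (intro ballI)
    fix c c'
    assume c: "c \<in> cells b s" and c': "c' \<in> cell_class k b s c"
    then have "c' \<in> cells b s" "fst c' = fst c"
      using Framed by (auto simp: block_def cells_def)
    then show "transfer x c' = transfer x c"
      using transfer_blockwise_const [OF dev] c by simp
  qed
next
  case Glued
  show ?thesis
  proof (cases "cells a s = {}")
    case True
    then show ?thesis
      using cells_nonempty_iff by simp
  next
    case False
    then obtain c0 where "c0 \<in> cells a s"
      by blast
    then have "\<forall>c\<in>cells a s. x c = x c0"
      using bspec [OF x] Glued by (metis cell_class.simps(3))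
    then show ?thesis
      using Glued transfer_const by simp
  qed
qed

lemma transfer_class_sum_zero:
  assumes x: "\<forall>c\<in>cells a s. (\<Sum>c'\<in>cell_class k a s c. x c') = 0"
  shows "\<forall>c\<in>cells b s. (\<Sum>c'\<in>cell_class k b s c. transfer x c') = 0"
proof (cases k)
  case Unshared
  then show ?thesis
    using x transfer_const [of x 0] by simp
next
  case Framed
  have block_sum: "(\<Sum>c\<in>block a i. x c) = 0" if i: "i \<in> {1..s}" for i
    using x Framed a_pos [OF i] i by (auto simp: mem_cells dest!: bspec [of _ _ "(i, 1)"])
  then have m: "mean_on (cells a s) x = 0"
    by (simp add: mean_on_def sum_cells)
  show ?thesis
  proof
    fix c
    assume "c \<in> cells b s"
    then have i: "fst c \<in> {1..s}"
      by (auto simp: cells_def)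
    show "(\<Sum>c'\<in>cell_class k b s c. transfer x c') = 0"
      using Framed block_sum_transfer [OF i, of x] block_sum [OF i] m by simp
  qed
next
  case Glued
  show ?thesis
  proof (cases "cells a s = {}")
    case True
    then show ?thesis
      using cells_nonempty_iff by simp
  next
    case False
    then obtain c0 where "c0 \<in> cells a s"
      by blast
    then have "(\<Sum>c\<in>cells a s. x c) = 0"
      using bspec [OF x] Glued by simp
    then show ?thesis
      using Glued sum_transfer [of x] by simp
  qed
qed

end

section \<open>Counting independent eigenfunctions\<close>

lemma magnetic_graph_finite_out_edges:
  "magnetic_graph G \<Longrightarrow> finite (out_edges G v)"
  by (simp add: magnetic_graph_def out_edges_def)

lemma magnetic_graph_wdeg_pos:
  assumes "magnetic_graph G" and "v \<in> verts G"
  shows "wdeg G v > 0"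
  unfolding wdeg_def
proof (rule sum_pos)
  show "finite (out_edges G v)" "out_edges G v \<noteq> {}"
    using assms by (auto simp: magnetic_graph_def out_edges_def)
  show "\<And>e. e \<in> out_edges G v \<Longrightarrow> 0 < wt G e"
    using assms(1) by (auto simp: magnetic_graph_def out_edges_def)
qed

lemma mag_laplacian_lincomb:
  "mag_laplacian K (\<lambda>y. \<Sum>k<n. \<alpha> k * F k y) v = (\<Sum>k<n. \<alpha> k * mag_laplacian K (F k) v)"
  unfolding mag_laplacian_def
  by (simp add: sum_subtractf sum_distrib_left algebra_simps sum.swap [of _ "{..<n}"])

lemma is_eigenfunction_lincomb:
  assumes "\<forall>k<n. is_eigenfunction K \<mu> (F k)"
  shows "is_eigenfunction K \<mu> (\<lambda>y. \<Sum>k<n. \<alpha> k * F k y)"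
  using assms unfolding is_eigenfunction_def
  by (auto simp: mag_laplacian_lincomb sum_distrib_left algebra_simps)

lemma mag_laplacian_cong:
  assumes "magnetic_graph G" and "\<forall>w\<in>verts G. u w = u' w" and "v \<in> verts G"
  shows "mag_laplacian G u v = mag_laplacian G u' v"
proof -
  have "tgt G e \<in> verts G" if "e \<in> out_edges G v" for e
    using assms(1) that unfolding magnetic_graph_def out_edges_def by blast
  then show ?thesis
    using assms(2,3) unfolding mag_laplacian_def by (auto intro!: sum.cong)
qed

definition indep_eigen_counts :: "('v, 'e) mgraph \<Rightarrow> complex \<Rightarrow> nat set" where
  "indep_eigen_counts K \<mu> = {n. \<exists>f. (\<forall>i<n. is_eigenfunction K \<mu> (f i)) \<and> lin_indep_fam n f}"

lemma eig_mult_eq_Max: "eig_mult K \<mu> = Max (indep_eigen_counts K \<mu>)"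
  by (simp add: eig_mult_def indep_eigen_counts_def)

lemma indep_eigen_counts_mono:
  assumes eigen: "\<And>f. is_eigenfunction K \<mu> f \<Longrightarrow> is_eigenfunction K' \<mu> (T f)"
    and lin: "\<And>(n::nat) \<alpha> F y. T (\<lambda>y. \<Sum>k<n. \<alpha> k * F k y) y = (\<Sum>k<n. \<alpha> k * T (F k) y)"
    and kernel: "\<And>f y. is_eigenfunction K \<mu> f \<Longrightarrow> \<forall>y. T f y = 0 \<Longrightarrow> f y = 0"
  shows "indep_eigen_counts K \<mu> \<subseteq> indep_eigen_counts K' \<mu>"
proof
  fix n
  assume "n \<in> indep_eigen_counts K \<mu>"
  then obtain F where eF: "\<forall>i<n. is_eigenfunction K \<mu> (F i)" and iF: "lin_indep_fam n F"
    by (auto simp: indep_eigen_counts_def)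
  have "lin_indep_fam n (\<lambda>i. T (F i))"
    unfolding lin_indep_fam_def
  proof (intro allI impI)
    fix \<alpha> :: "nat \<Rightarrow> complex" and i
    assume "\<forall>y. (\<Sum>k<n. \<alpha> k * T (F k) y) = 0" and "i < n"
    then have "\<forall>y. T (\<lambda>y. \<Sum>k<n. \<alpha> k * F k y) y = 0"
      by (simp add: lin)
    then have "\<forall>y. (\<Sum>k<n. \<alpha> k * F k y) = 0"
      using kernel [OF is_eigenfunction_lincomb [OF eF]] by blast
    then show "\<alpha> i = 0"
      using iF \<open>i < n\<close> unfolding lin_indep_fam_def by blast
  qed
  moreover have "\<forall>i<n. is_eigenfunction K' \<mu> (T (F i))"
    using eF eigen by blast
  ultimately show "n \<in> indep_eigen_counts K' \<mu>"
    by (auto simp: indep_eigen_counts_def)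
qed

lemma mag_laplacian_cell_transfer:
  assumes "finite (out_edges G v)"
  shows "mag_laplacian G (\<lambda>w. cell_transfer a b s \<sigma> (X w) c) v =
    cell_transfer a b s \<sigma> (\<lambda>c0. mag_laplacian G (\<lambda>w. X w c0) v) c"
proof -
  let ?T = "cell_transfer a b s \<sigma>"
  let ?k = "complex_of_real (1 / wdeg G v)"
  let ?\<beta> = "\<lambda>e. complex_of_real (wt G e) * cis (pot G e)"
  have "mag_laplacian G (\<lambda>w. ?T (X w) c) v = ?T (X v) c - ?k * ?T (\<lambda>c0. \<Sum>e\<in>out_edges G v. ?\<beta> e * X (tgt G e) c0) c"
    by (simp add: mag_laplacian_def cell_transfer_lincomb [OF assms])
  also have "\<dots> = ?T (\<lambda>c0. 1 * X v c0 + (- ?k) * (\<Sum>e\<in>out_edges G v. ?\<beta> e * X (tgt G e) c0)) c"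
    by (simp only: cell_transfer_lin) simp
  finally show ?thesis
    by (simp add: mag_laplacian_def)
qed

section \<open>Degree statistics\<close>

lemma sum_image_fibers:
  fixes g :: "'b \<Rightarrow> real"
  assumes "finite S"
  shows "(\<Sum>y\<in>h ` S. g y) = (\<Sum>x\<in>S. g (h x) / real (card {x'\<in>S. h x' = h x}))"
proof -
  have "(\<Sum>x\<in>S. g (h x) / real (card {x'\<in>S. h x' = h x})) =
      (\<Sum>y\<in>h ` S. \<Sum>x\<in>{x\<in>S. h x = y}. g (h x) / real (card {x'\<in>S. h x' = h x}))"
    by (rule sum.image_gen [OF assms])
  also have "\<dots> = (\<Sum>y\<in>h ` S. g y)"
  proof (rule sum.cong [OF refl])
    fix y
    assume "y \<in> h ` S"
    then have "{x\<in>S. h x = y} \<noteq> {}"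
      by auto
    moreover have "(\<Sum>x\<in>{x\<in>S. h x = y}. g (h x) / real (card {x'\<in>S. h x' = h x})) =
        (\<Sum>x\<in>{x\<in>S. h x = y}. g y / real (card {x'\<in>S. h x' = y}))"
      by (rule sum.cong) auto
    ultimately show "(\<Sum>x\<in>{x\<in>S. h x = y}. g (h x) / real (card {x'\<in>S. h x' = h x})) = g y"
      using assms by simp
  qed
  finally show ?thesis ..
qed

definition degree_stat :: "('v, 'e) mgraph \<Rightarrow> (nat \<Rightarrow> real) \<Rightarrow> real" where
  "degree_stat K F = (\<Sum>y\<in>verts K. F (card (out_edges K y)))"

lemma mg_isomorphic_degree_stat:
  assumes iso: "mg_isomorphic K1 K2" and src: "\<forall>e\<in>edges K1. src K1 e \<in> verts K1"
  shows "degree_stat K1 F = degree_stat K2 F"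
proof -
  obtain \<phi> \<psi> where bv: "bij_betw \<phi> (verts K1) (verts K2)" and be: "bij_betw \<psi> (edges K1) (edges K2)"
    and hs: "\<forall>e\<in>edges K1. src K2 (\<psi> e) = \<phi> (src K1 e)"
    using iso unfolding mg_isomorphic_def by blast
  have out: "out_edges K2 (\<phi> y) = \<psi> ` out_edges K1 y" if y: "y \<in> verts K1" for y
  proof (intro equalityI subsetI)
    fix e'
    assume "e' \<in> out_edges K2 (\<phi> y)"
    then have e': "e' \<in> edges K2" "src K2 e' = \<phi> y"
      by (auto simp: out_edges_def)
    then obtain e where e: "e \<in> edges K1" "e' = \<psi> e"
      using bij_betw_imp_surj_on [OF be] by (metis imageE)
    have "\<phi> (src K1 e) = \<phi> y"
      using hs e e' by simp
    then have "src K1 e = y"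
      using bij_betw_imp_inj_on [OF bv] src e y by (metis inj_on_def)
    then show "e' \<in> \<psi> ` out_edges K1 y"
      using e by (auto simp: out_edges_def)
  next
    fix e'
    assume "e' \<in> \<psi> ` out_edges K1 y"
    then show "e' \<in> out_edges K2 (\<phi> y)"
      using hs bij_betw_apply [OF be] by (auto simp: out_edges_def)
  qed
  have "inj_on \<psi> (out_edges K1 y)" for y
    using bij_betw_imp_inj_on [OF be] by (rule inj_on_subset) (auto simp: out_edges_def)
  then have "card (out_edges K2 (\<phi> y)) = card (out_edges K1 y)" if "y \<in> verts K1" for y
    using out [OF that] by (simp add: card_image)
  then show ?thesis
    unfolding degree_stat_def sum.reindex_bij_betw [OF bv, symmetric] by simp
qed

definition scaled_copies :: "'v set \<Rightarrow> ('v \<Rightarrow> nat) \<Rightarrow> nat multiset \<Rightarrow> nat multiset" where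
  "scaled_copies D d X = (\<Sum>v\<in>D. image_mset (\<lambda>x. x * d v) X)"

lemma sum_mset_scaled_copies:
  assumes "finite D"
  shows "(\<Sum>n\<in>#scaled_copies D d X. F n) = (\<Sum>v\<in>D. \<Sum>x\<in>#X. F (x * d v))"
  using assms unfolding scaled_copies_def
  by (induction D rule: finite_induct) (simp_all add: multiset.map_comp comp_def)

lemma scaled_copies_add_mset:
  "scaled_copies D d (add_mset m X) = (\<Sum>v\<in>D. {#m * d v#}) + scaled_copies D d X"
  unfolding scaled_copies_def sum.distrib [symmetric] by simp

lemma in_scaled_copies:
  assumes "finite D"
  shows "n \<in># scaled_copies D d X \<longleftrightarrow> (\<exists>v\<in>D. \<exists>x\<in>#X. n = x * d v)"
  using assms by (auto simp: scaled_copies_def set_mset_sum)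

lemma scaled_copies_eq_empty_iff:
  assumes "finite D" and "D \<noteq> {}"
  shows "scaled_copies D d X = {#} \<longleftrightarrow> X = {#}"
  using assms by (auto simp: scaled_copies_def sum_eq_empty_iff)

lemma Max_mset_le_if_scaled_copies_eq:
  assumes fin: "finite D" and ne: "D \<noteq> {}" and pos: "\<forall>v\<in>D. d v > 0"
    and XY: "scaled_copies D d X = scaled_copies D d Y" and X: "X \<noteq> {#}"
  shows "Max_mset X \<le> Max_mset Y"
proof -
  have "Max (d ` D) \<in> d ` D"
    using fin ne by simp
  then obtain v0 where v0: "v0 \<in> D" "d v0 = Max (d ` D)"
    by auto
  have Y: "Y \<noteq> {#}"
    using X XY scaled_copies_eq_empty_iff [OF fin ne] by metis
  have "Max_mset X * d v0 \<in># scaled_copies D d X"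
    using X v0(1) fin by (auto simp: in_scaled_copies intro!: bexI [of _ v0] bexI [of _ "Max_mset X"])
  then obtain v y where v: "v \<in> D" and y: "y \<in># Y" and eq: "Max_mset X * d v0 = y * d v"
    using fin XY by (auto simp: in_scaled_copies)
  have "y * d v \<le> Max_mset Y * d v0"
    using v y Y fin v0(2) by (intro mult_le_mono) auto
  then have "Max_mset X * d v0 \<le> Max_mset Y * d v0"
    using eq by simp
  then show ?thesis
    using pos v0(1) by simp
qed

lemma scaled_copies_inj:
  assumes fin: "finite D" and ne: "D \<noteq> {}" and pos: "\<forall>v\<in>D. d v > 0"
    and eq: "scaled_copies D d A = scaled_copies D d B"
  shows "A = B"
  using eq
proof (induction "size A" arbitrary: A B rule: less_induct)
  case less
  note empty_iff = scaled_copies_eq_empty_iff [OF fin ne]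
  show ?case
  proof (cases "A = {#}")
    case True
    then show ?thesis
      using less.prems empty_iff by metis
  next
    case False
    then have "B \<noteq> {#}"
      using less.prems empty_iff by metis
    define m where "m = Max_mset A"
    have "m = Max_mset B"
      using Max_mset_le_if_scaled_copies_eq [OF fin ne pos] less.prems False \<open>B \<noteq> {#}\<close>
      unfolding m_def by (simp add: order_antisym)
    moreover have "m \<in># A"
      using False by (simp add: m_def)
    ultimately have "m \<in># A" "m \<in># B"
      using \<open>B \<noteq> {#}\<close> by simp_all
    then have A: "A = add_mset m (A - {#m#})" and B: "B = add_mset m (B - {#m#})"
      by (simp_all add: insert_DiffM)
    have "scaled_copies D d (A - {#m#}) = scaled_copies D d (B - {#m#})"
      using less.prems scaled_copies_add_mset [of D d m] A B by (metis add_left_cancel)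
    moreover have "size (A - {#m#}) < size A"
      using A by (metis size_add_mset lessI)
    ultimately have "A - {#m#} = B - {#m#}"
      using less.hyps by blast
    then show ?thesis
      using A B by simp
  qed
qed

lemma multiset_eq_if_sum_mset_eq:
  assumes "\<And>F :: nat \<Rightarrow> real. (\<Sum>n\<in>#M. F n) = (\<Sum>n\<in>#N. F n)"
  shows "M = N"
proof (rule multiset_eqI)
  fix k
  show "count M k = count N k"
    using assms [of "\<lambda>n. if n = k then 1 else 0"] by (simp add: sum_mset_delta)
qed

section \<open>The contracted frame union of a partition\<close>

lemma copies_simps:
  "verts (copies n G) = verts G \<times> {1..n}"
  "edges (copies n G) = edges G \<times> {1..n}"
  "j \<in> {1..n} \<Longrightarrow> src (copies n G) (e, j) = (src G e, j)"
  "j \<in> {1..n} \<Longrightarrow> tgt (copies n G) (e, j) = (tgt G e, j)"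
  "j \<in> {1..n} \<Longrightarrow> wt (copies n G) (e, j) = wt G e"
  "j \<in> {1..n} \<Longrightarrow> pot (copies n G) (e, j) = pot G e"
  by (auto simp: copies_def disj_union_def)

lemma frame_simps:
  "verts (frame G V0 n) = (verts G \<times> {1..n}) // frame_rel G V0 n"
  "edges (frame G V0 n) = edges G \<times> {1..n}"
  "j \<in> {1..n} \<Longrightarrow> src (frame G V0 n) (e, j) = frame_rel G V0 n `` {(src G e, j)}"
  "j \<in> {1..n} \<Longrightarrow> tgt (frame G V0 n) (e, j) = frame_rel G V0 n `` {(tgt G e, j)}"
  "j \<in> {1..n} \<Longrightarrow> wt (frame G V0 n) (e, j) = wt G e"
  "j \<in> {1..n} \<Longrightarrow> pot (frame G V0 n) (e, j) = pot G e"
  by (auto simp: frame_def contract_def copies_simps)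

lemma frame_rel_class:
  assumes "v \<in> verts G" and "j \<in> {1..n}"
  shows "frame_rel G V0 n `` {(v, j)} = (if v \<in> V0 then {v} \<times> {1..n} else {(v, j)})"
  using assms by (auto simp: frame_rel_def)

type_synonym 'v union_vertex = "(('v \<times> nat) set \<times> nat) set"

locale contracted_frame_union =
  fixes G :: "('v, 'e) mgraph" and V0 V1 :: "'v set" and A :: "nat multiset"
  assumes mg: "magnetic_graph G" and V0_subset: "V0 \<subseteq> verts G" and V1_subset: "V1 \<subseteq> V0"
    and A_pos: "0 \<notin># A"
begin

abbreviation V :: "'v set" where
  "V \<equiv> verts G"

abbreviation E :: "'e set" where
  "E \<equiv> edges G"

abbreviation FU :: "(('v \<times> nat) set \<times> nat, ('e \<times> nat) \<times> nat) mgraph" where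
  "FU \<equiv> frame_union G V0 A"

abbreviation H :: "('v union_vertex, ('e \<times> nat) \<times> nat) mgraph" where
  "H \<equiv> contracted_union G V0 V1 A"

definition parts :: "nat list" where
  "parts = sorted_list_of_multiset A"

definition s :: nat where
  "s = size A"

definition a :: "nat \<Rightarrow> nat" where
  "a i = parts ! (i - 1)"

definition frame_vertex :: "'v \<times> cell \<Rightarrow> ('v \<times> nat) set \<times> nat" where
  "frame_vertex = (\<lambda>(v, i, j). (frame_rel G V0 (a i) `` {(v, j)}, i))"

definition vertex :: "'v \<times> cell \<Rightarrow> 'v union_vertex" where
  "vertex x = contr_rel FU V1 `` {frame_vertex x}"

abbreviation kind :: "'v \<Rightarrow> vertex_kind" where
  "kind \<equiv> kind_of V0 V1"

lemma length_parts: "length parts = s"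
  by (metis parts_def s_def mset_sorted_list_of_multiset size_mset)

lemma sum_parts: "(\<Sum>i=1..s. f (a i)) = (\<Sum>x\<in>#A. f x)"
proof -
  have "(\<Sum>x\<in>#A. f x) = sum_list (map f parts)"
    by (metis parts_def mset_map mset_sorted_list_of_multiset sum_mset_sum_list)
  also have "\<dots> = (\<Sum>i<s. f (parts ! i))"
    by (simp add: sum_list_sum_nth length_parts atLeast0LessThan)
  also have "\<dots> = (\<Sum>i=1..s. f (a i))"
    by (rule sum.reindex_bij_witness [of _ "\<lambda>i. i - 1" Suc]) (auto simp: a_def)
  finally show ?thesis ..
qed

lemma a_pos: "i \<in> {1..s} \<Longrightarrow> a i > 0"
proof -
  assume "i \<in> {1..s}"
  then have "a i \<in> set parts"
    unfolding a_def by (intro nth_mem) (auto simp: length_parts)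
  then have "a i \<in># A"
    by (simp add: parts_def)
  then show ?thesis
    using A_pos by (cases "a i") auto
qed

lemma sum_a: "(\<Sum>i=1..s. a i) = sum_mset A"
  using sum_parts [of id] by simp

lemma card_cells_parts: "card (cells a s) = sum_mset A"
  using sum_a by (simp add: card_cells)

lemma card_inner_cells_parts: "card (inner_cells a s) + s = sum_mset A"
  using card_inner_cells [of s a, OF a_pos] sum_a by simp

lemma frame_union_simps:
  "verts FU = (\<Union>i\<in>{1..s}. ((V \<times> {1..a i}) // frame_rel G V0 (a i)) \<times> {i})"
  "edges FU = (\<Union>i\<in>{1..s}. (E \<times> {1..a i}) \<times> {i})"
  "(i, j) \<in> cells a s \<Longrightarrow> src FU ((e, j), i) = (frame_rel G V0 (a i) `` {(src G e, j)}, i)"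
  "(i, j) \<in> cells a s \<Longrightarrow> tgt FU ((e, j), i) = (frame_rel G V0 (a i) `` {(tgt G e, j)}, i)"
  "(i, j) \<in> cells a s \<Longrightarrow> wt FU ((e, j), i) = wt G e"
  "(i, j) \<in> cells a s \<Longrightarrow> pot FU ((e, j), i) = pot G e"
  by (auto simp: frame_union_def disj_union_def frame_simps a_def mem_cells
      simp flip: s_def parts_def length_parts)

lemma fst_frame_vertex:
  assumes "v \<in> V" and "(i, j) \<in> cells a s"
  shows "fst (frame_vertex (v, i, j)) = (if v \<in> V0 then {v} \<times> {1..a i} else {(v, j)})"
  using assms by (simp add: frame_vertex_def frame_rel_class mem_cells)

lemma frame_vertex_eq_iff:
  assumes "v \<in> V" "c \<in> cells a s" "v' \<in> V" "c' \<in> cells a s"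
  shows "frame_vertex (v', c') = frame_vertex (v, c) \<longleftrightarrow> v' = v \<and> fst c' = fst c \<and> (v \<in> V0 \<or> c' = c)"
proof -
  obtain i j i' j' where c: "c = (i, j)" and c': "c' = (i', j')"
    by (cases c, cases c') auto
  have "a i > 0"
    using assms(2) a_pos by (auto simp: c mem_cells)
  then show ?thesis
    using assms fst_frame_vertex [of v i j] fst_frame_vertex [of v' i' j']
    by (auto simp: c c' prod_eq_iff frame_vertex_def times_eq_iff)
qed

lemma verts_frame_union: "verts FU = frame_vertex ` (V \<times> cells a s)"
proof (intro equalityI subsetI)
  fix x
  assume "x \<in> verts FU"
  then obtain i v j where "i \<in> {1..s}" "v \<in> V" "j \<in> {1..a i}" "x = frame_vertex (v, i, j)"
    by (auto simp: frame_union_simps quotient_def frame_vertex_def)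
  then show "x \<in> frame_vertex ` (V \<times> cells a s)"
    by (auto simp: mem_cells)
next
  fix x
  assume "x \<in> frame_vertex ` (V \<times> cells a s)"
  then obtain i v j where ivj: "i \<in> {1..s}" "v \<in> V" "j \<in> {1..a i}" "x = frame_vertex (v, i, j)"
    by (auto simp: mem_cells)
  then have "frame_rel G V0 (a i) `` {(v, j)} \<in> (V \<times> {1..a i}) // frame_rel G V0 (a i)"
    by (intro quotientI) simp
  then show "x \<in> verts FU"
    using ivj by (auto simp: frame_union_simps frame_vertex_def)
qed

(* contr_rel recognizes the copies of a glued vertex v1 by the point (v1, 1). *)
lemma glued_point_in_frame_vertex:
  assumes "v1 \<in> V1" "w \<in> V" "c \<in> cells a s"
  shows "(v1, 1) \<in> fst (frame_vertex (w, c)) \<longleftrightarrow> w = v1"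
proof -
  obtain i j where c: "c = (i, j)"
    by (cases c)
  have "a i > 0"
    using assms(3) a_pos by (auto simp: c mem_cells)
  then show ?thesis
    using assms V1_subset by (auto simp: c fst_frame_vertex)
qed

lemma frame_vertex_in_vertex:
  assumes "v \<in> V" "c \<in> cells a s" "w \<in> V" "c' \<in> cells a s"
  shows "frame_vertex (w, c') \<in> vertex (v, c) \<longleftrightarrow>
    frame_vertex (w, c') = frame_vertex (v, c) \<or> (v \<in> V1 \<and> w = v)"
proof -
  have "frame_vertex (w, c') \<in> vertex (v, c) \<longleftrightarrow> frame_vertex (w, c') = frame_vertex (v, c) \<or>
      (\<exists>v1\<in>V1. (v1, 1) \<in> fst (frame_vertex (v, c)) \<and> (v1, 1) \<in> fst (frame_vertex (w, c')))"
    using assms by (auto simp: vertex_def contr_rel_def verts_frame_union)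
  also have "(\<exists>v1\<in>V1. (v1, 1) \<in> fst (frame_vertex (v, c)) \<and> (v1, 1) \<in> fst (frame_vertex (w, c'))) \<longleftrightarrow>
      v \<in> V1 \<and> w = v"
    using glued_point_in_frame_vertex [OF _ assms(1,2)] glued_point_in_frame_vertex [OF _ assms(3,4)]
    by auto
  finally show ?thesis .
qed

lemma vertex_eq_image:
  assumes v: "v \<in> V" and c: "c \<in> cells a s"
  shows "vertex (v, c) = frame_vertex ` ({v} \<times> cell_class (kind v) a s c)"
proof (intro equalityI subsetI)
  fix y
  assume y: "y \<in> vertex (v, c)"
  then have "y \<in> verts FU"
    by (auto simp: vertex_def contr_rel_def)
  then obtain w c' where w: "w \<in> V" "c' \<in> cells a s" "y = frame_vertex (w, c')"
    by (auto simp: verts_frame_union)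
  then consider "frame_vertex (w, c') = frame_vertex (v, c)" | "v \<in> V1" "w = v"
    using y frame_vertex_in_vertex [OF v c] by blast
  then show "y \<in> frame_vertex ` ({v} \<times> cell_class (kind v) a s c)"
  proof cases
    case 1
    then show ?thesis
      using w c cell_class_self by blast
  next
    case 2
    then show ?thesis
      using w by (auto simp: kind_of_def)
  qed
next
  fix y
  assume "y \<in> frame_vertex ` ({v} \<times> cell_class (kind v) a s c)"
  then obtain c' where c': "c' \<in> cell_class (kind v) a s c" "y = frame_vertex (v, c')"
    by blast
  have "c' \<in> cells a s"
    using c' cell_class_subset_cells [OF c] by blast
  moreover have "frame_vertex (v, c') = frame_vertex (v, c) \<or> v \<in> V1"
    using c' c \<open>c' \<in> cells a s\<close> frame_vertex_eq_iff [OF v c v]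
    by (cases "kind v") (auto simp: kind_of_def block_def split: if_splits)
  ultimately show "y \<in> vertex (v, c)"
    using frame_vertex_in_vertex [OF v c v] c' by blast
qed

lemma vertex_eq_iff:
  assumes v: "v \<in> V" and c: "c \<in> cells a s" and v': "v' \<in> V" and c': "c' \<in> cells a s"
  shows "vertex (v', c') = vertex (v, c) \<longleftrightarrow> v' = v \<and> c' \<in> cell_class (kind v) a s c"
proof
  assume eq: "vertex (v', c') = vertex (v, c)"
  have "frame_vertex (v', c') \<in> vertex (v, c)"
    using eq vertex_eq_image [OF v' c'] cell_class_self [OF c'] by blast
  then obtain c'' where c'': "c'' \<in> cell_class (kind v) a s c" "frame_vertex (v', c') = frame_vertex (v, c'')"
    using vertex_eq_image [OF v c] by blast
  have "c'' \<in> cells a s"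
    using c'' cell_class_subset_cells [OF c] by blast
  then have "v' = v" "fst c' = fst c''" "v \<in> V0 \<or> c' = c''"
    using frame_vertex_eq_iff [OF v \<open>c'' \<in> cells a s\<close> v' c'] c'' by auto
  moreover have "c' \<in> cell_class (kind v) a s c"
    using calculation c'' c' by (cases "kind v"; cases c') (auto simp: kind_of_def block_def mem_cells split: if_splits)
  ultimately show "v' = v \<and> c' \<in> cell_class (kind v) a s c"
    by blast
next
  assume "v' = v \<and> c' \<in> cell_class (kind v) a s c"
  then show "vertex (v', c') = vertex (v, c)"
    using vertex_eq_image [OF v c] vertex_eq_image [OF v c'] cell_class_eq [OF c] by simp
qed

lemma vertex_cell_class:
  assumes v: "v \<in> V" and c: "c \<in> cells a s" and c': "c' \<in> cell_class (kind v) a s c"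
  shows "vertex (v, c') = vertex (v, c)"
proof -
  have "c' \<in> cells a s"
    using c' cell_class_subset_cells [OF c] by blast
  then show ?thesis
    using vertex_eq_iff [OF v c v] c' by blast
qed

lemma contracted_union_eq: "H = contract FU (contr_rel FU V1)"
  by (simp add: contracted_union_def Let_def)

lemma verts_contracted_union: "verts H = vertex ` (V \<times> cells a s)"
  by (auto simp: contracted_union_eq contract_def quotient_def verts_frame_union vertex_def)

lemma edges_contracted_union: "((e, j), i) \<in> edges H \<longleftrightarrow> e \<in> E \<and> (i, j) \<in> cells a s"
  by (auto simp: contracted_union_eq contract_def frame_union_simps mem_cells)

lemma contracted_union_edge_simps:
  assumes "(i, j) \<in> cells a s"
  shows "src H ((e, j), i) = vertex (src G e, i, j)"
    and "tgt H ((e, j), i) = vertex (tgt G e, i, j)"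
    and "wt H ((e, j), i) = wt G e"
    and "pot H ((e, j), i) = pot G e"
  using assms by (simp_all add: contracted_union_eq contract_def frame_union_simps vertex_def frame_vertex_def)

lemma inj_edge_copy: "inj (\<lambda>(e, c). ((e, snd c), fst c))"
  by (auto simp: inj_def prod_eq_iff)

lemma out_edges_vertex:
  assumes v: "v \<in> V" and c: "c \<in> cells a s"
  shows "out_edges H (vertex (v, c)) =
    (\<lambda>(e, c'). ((e, snd c'), fst c')) ` (out_edges G v \<times> cell_class (kind v) a s c)"
proof (intro equalityI subsetI)
  fix x
  assume x: "x \<in> out_edges H (vertex (v, c))"
  obtain e j i where "x = ((e, j), i)"
    by (metis prod.collapse)
  then have xe: "x = ((e, j), i)" "e \<in> E" "(i, j) \<in> cells a s"
    using x by (auto simp: out_edges_def edges_contracted_union)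
  have "src G e \<in> V"
    using mg xe(2) by (auto simp: magnetic_graph_def)
  moreover have "vertex (src G e, i, j) = vertex (v, c)"
    using x xe contracted_union_edge_simps(1) [of i j] by (auto simp: out_edges_def)
  ultimately have "src G e = v" "(i, j) \<in> cell_class (kind v) a s c"
    using vertex_eq_iff [OF v c _ xe(3)] by auto
  then show "x \<in> (\<lambda>(e, c'). ((e, snd c'), fst c')) ` (out_edges G v \<times> cell_class (kind v) a s c)"
    using xe by (force simp: out_edges_def)
next
  fix x
  assume "x \<in> (\<lambda>(e, c'). ((e, snd c'), fst c')) ` (out_edges G v \<times> cell_class (kind v) a s c)"
  then obtain e c' where e: "e \<in> E" "src G e = v" and c': "c' \<in> cell_class (kind v) a s c"
    and x: "x = ((e, snd c'), fst c')"
    by (auto simp: out_edges_def)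
  have "c' \<in> cells a s"
    using c' cell_class_subset_cells [OF c] by blast
  moreover have "vertex (v, c') = vertex (v, c)"
    using vertex_cell_class [OF v c c'] .
  ultimately show "x \<in> out_edges H (vertex (v, c))"
    using e x contracted_union_edge_simps(1) [of "fst c'" "snd c'"] edges_contracted_union [of e "snd c'" "fst c'"]
    by (simp add: out_edges_def)
qed

lemma sum_out_edges_vertex:
  assumes v: "v \<in> V" and c: "c \<in> cells a s"
  shows "(\<Sum>x\<in>out_edges H (vertex (v, c)). F x) =
    (\<Sum>c'\<in>cell_class (kind v) a s c. \<Sum>e\<in>out_edges G v. F ((e, snd c'), fst c'))"
proof -
  have "(\<Sum>x\<in>out_edges H (vertex (v, c)). F x) =
      (\<Sum>(e, c')\<in>out_edges G v \<times> cell_class (kind v) a s c. F ((e, snd c'), fst c'))"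
    unfolding out_edges_vertex [OF v c] sum.reindex [OF inj_on_subset [OF inj_edge_copy subset_UNIV]]
    by (simp add: comp_def case_prod_unfold)
  also have "\<dots> = (\<Sum>c'\<in>cell_class (kind v) a s c. \<Sum>e\<in>out_edges G v. F ((e, snd c'), fst c'))"
    by (simp add: sum.cartesian_product [symmetric] sum.swap [of _ "out_edges G v"])
  finally show ?thesis .
qed

lemma card_out_edges_vertex:
  assumes v: "v \<in> V" and c: "c \<in> cells a s"
  shows "card (out_edges H (vertex (v, c))) = card (cell_class (kind v) a s c) * card (out_edges G v)"
  unfolding out_edges_vertex [OF v c] card_image [OF inj_on_subset [OF inj_edge_copy subset_UNIV]]
  by (simp add: card_cartesian_product)

lemma wdeg_vertex:
  assumes v: "v \<in> V" and c: "c \<in> cells a s"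
  shows "wdeg H (vertex (v, c)) = real (card (cell_class (kind v) a s c)) * wdeg G v"
proof -
  have "(\<Sum>e\<in>out_edges G v. wt H ((e, snd c'), fst c')) = wdeg G v"
    if "c' \<in> cell_class (kind v) a s c" for c'
  proof -
    have "(fst c', snd c') \<in> cells a s"
      using that cell_class_subset_cells [OF c] by auto
    then show ?thesis
      by (simp add: wdeg_def contracted_union_edge_simps)
  qed
  then show ?thesis
    unfolding wdeg_def [of H] sum_out_edges_vertex [OF v c] by simp
qed

lemma card_cell_class_pos: "c \<in> cells a s \<Longrightarrow> card (cell_class k a s c) > 0"
  using cell_class_self cell_class_subset_cells
  by (metis card_gt_0_iff empty_iff finite_cells finite_subset)

lemma mag_laplacian_vertex:
  assumes v: "v \<in> V" and c: "c \<in> cells a s"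
  shows "mag_laplacian H f (vertex (v, c)) =
    (\<Sum>c'\<in>cell_class (kind v) a s c. mag_laplacian G (\<lambda>w. f (vertex (w, c'))) v)
      / of_nat (card (cell_class (kind v) a s c))"
proof -
  let ?N = "cell_class (kind v) a s c"
  let ?S = "\<lambda>c'. \<Sum>e\<in>out_edges G v. complex_of_real (wt G e) * cis (pot G e) * f (vertex (tgt G e, c'))"
  have "(\<Sum>e\<in>out_edges G v. complex_of_real (wt H ((e, snd c'), fst c')) * cis (pot H ((e, snd c'), fst c'))
      * f (tgt H ((e, snd c'), fst c'))) = ?S c'" if "c' \<in> ?N" for c'
  proof -
    have "(fst c', snd c') \<in> cells a s"
      using that cell_class_subset_cells [OF c] by auto
    then show ?thesis
      by (simp add: contracted_union_edge_simps)
  qed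
  then have out: "(\<Sum>x\<in>out_edges H (vertex (v, c)). complex_of_real (wt H x) * cis (pot H x) * f (tgt H x))
      = (\<Sum>c'\<in>?N. ?S c')"
    unfolding sum_out_edges_vertex [OF v c] by simp
  have "f (vertex (v, c')) = f (vertex (v, c))" if "c' \<in> ?N" for c'
    using vertex_cell_class [OF v c that] by simp
  then have "(\<Sum>c'\<in>?N. mag_laplacian G (\<lambda>w. f (vertex (w, c'))) v) =
      (\<Sum>c'\<in>?N. f (vertex (v, c)) - complex_of_real (1 / wdeg G v) * ?S c')"
    by (intro sum.cong) (simp_all add: mag_laplacian_def)
  then show ?thesis
    using card_cell_class_pos [OF c, of "kind v"] magnetic_graph_wdeg_pos [OF mg v]
    unfolding mag_laplacian_def [of H] wdeg_vertex [OF v c] out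
    by (simp add: sum_subtractf sum_distrib_left field_simps)
qed

lemma sum_cells_over_class:
  assumes "A \<noteq> {#}"
  shows "(\<Sum>c\<in>cells a s. g (card (cell_class t a s c)) / real (card (cell_class t a s c))) =
    (case t of Unshared \<Rightarrow> real (sum_mset A) * g 1
             | Framed \<Rightarrow> (\<Sum>x\<in>#A. g x)
             | Glued \<Rightarrow> g (sum_mset A))"
proof (cases t)
  case Unshared
  then show ?thesis
    by (simp add: card_cells_parts)
next
  case Framed
  have "(\<Sum>c\<in>cells a s. g (card (cell_class t a s c)) / real (card (cell_class t a s c))) =
      (\<Sum>i=1..s. \<Sum>c\<in>block a i. g (a i) / real (a i))"
    unfolding sum_cells using Framed by (intro sum.cong) (auto simp: block_def)
  also have "\<dots> = (\<Sum>i=1..s. g (a i))"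
    using a_pos by (intro sum.cong) auto
  finally show ?thesis
    using Framed sum_parts [of g] by simp
next
  case Glued
  have "sum_mset A > 0"
    using assms A_pos by (metis gr0I multiset_nonemptyE sum_mset_0_iff)
  then have "card (cells a s) > 0"
    by (simp add: card_cells_parts)
  then have "(\<Sum>c\<in>cells a s. g (card (cells a s)) / real (card (cells a s))) = g (card (cells a s))"
    by (simp del: card_0_eq)
  then show ?thesis
    using Glued by (simp only: cell_class.simps vertex_kind.case card_cells_parts)
qed

lemma vertex_fiber:
  assumes v: "v \<in> V" and c: "c \<in> cells a s"
  shows "{x \<in> V \<times> cells a s. vertex x = vertex (v, c)} = {v} \<times> cell_class (kind v) a s c"
proof (intro equalityI subsetI)
  fix x
  assume "x \<in> {x \<in> V \<times> cells a s. vertex x = vertex (v, c)}"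
  then show "x \<in> {v} \<times> cell_class (kind v) a s c"
    using vertex_eq_iff [OF v c] by (cases x) auto
next
  fix x
  assume "x \<in> {v} \<times> cell_class (kind v) a s c"
  then obtain c' where "x = (v, c')" and c': "c' \<in> cell_class (kind v) a s c"
    by blast
  moreover have "c' \<in> cells a s"
    using c' cell_class_subset_cells [OF c] by blast
  ultimately show "x \<in> {x \<in> V \<times> cells a s. vertex x = vertex (v, c)}"
    using v vertex_cell_class [OF v c c'] by simp
qed

lemma degree_stat_contracted_union:
  assumes "A \<noteq> {#}"
  defines "d \<equiv> \<lambda>v. card (out_edges G v)"
  shows "degree_stat H F =
    (\<Sum>v\<in>V - (V0 - V1). if v \<in> V1 then F (sum_mset A * d v) else real (sum_mset A) * F (d v))
    + (\<Sum>n\<in>#scaled_copies (V0 - V1) d A. F n)"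
proof -
  have fin: "finite V"
    using mg by (simp add: magnetic_graph_def)
  have "degree_stat H F =
      (\<Sum>x\<in>V \<times> cells a s. F (card (out_edges H (vertex x))) / real (card {x'\<in>V \<times> cells a s. vertex x' = vertex x}))"
    unfolding degree_stat_def verts_contracted_union
    by (rule sum_image_fibers [OF finite_SigmaI [OF fin finite_cells], where h = vertex and g = "\<lambda>y. F (card (out_edges H y))"])
  also have "\<dots> = (\<Sum>v\<in>V. \<Sum>c\<in>cells a s.
      F (card (cell_class (kind v) a s c) * d v) / real (card (cell_class (kind v) a s c)))"
    unfolding sum.cartesian_product
    by (intro sum.cong) (auto simp: vertex_fiber card_out_edges_vertex card_cartesian_product d_def)
  also have "\<dots> = (\<Sum>v\<in>V. if v \<in> V0 - V1 then (\<Sum>x\<in>#A. F (x * d v))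
      else if v \<in> V1 then F (sum_mset A * d v) else real (sum_mset A) * F (d v))"
    (is "_ = sum ?g V")
    using sum_cells_over_class [OF assms(1), of "\<lambda>x. F (x * d _)"]
    by (intro sum.cong) (auto simp: kind_of_def)
  also have "\<dots> = sum ?g (V - (V0 - V1)) + sum ?g (V0 - V1)"
    using fin V0_subset by (intro sum.subset_diff) auto
  also have "\<dots> = (\<Sum>v\<in>V - (V0 - V1). if v \<in> V1 then F (sum_mset A * d v) else real (sum_mset A) * F (d v))
      + (\<Sum>v\<in>V0 - V1. \<Sum>x\<in>#A. F (x * d v))"
    by (intro arg_cong2 [where f = "(+)"] sum.cong) auto
  moreover have "finite (V0 - V1)"
    using fin V0_subset finite_subset by blast
  ultimately show ?thesis
    by (simp add: sum_mset_scaled_copies)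
qed

lemma src_in_verts_contracted_union: "\<forall>e\<in>edges H. src H e \<in> verts H"
proof
  fix x
  assume x: "x \<in> edges H"
  obtain e j i where "x = ((e, j), i)"
    by (metis prod.collapse)
  then have "x = ((e, j), i)" "e \<in> E" "(i, j) \<in> cells a s"
    using x by (simp_all add: edges_contracted_union)
  moreover have "src G e \<in> V"
    using mg \<open>e \<in> E\<close> by (auto simp: magnetic_graph_def)
  ultimately show "src H x \<in> verts H"
    by (simp add: contracted_union_edge_simps verts_contracted_union)
qed

definition eigen_defect :: "complex \<Rightarrow> ('v union_vertex \<Rightarrow> complex) \<Rightarrow> 'v \<Rightarrow> cell \<Rightarrow> complex"
  where "eigen_defect \<mu> f v = (\<lambda>c. mag_laplacian G (\<lambda>w. f (vertex (w, c))) v - \<mu> * f (vertex (v, c)))"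

lemma eigen_equation_vertex:
  assumes v: "v \<in> V" and c: "c \<in> cells a s"
  shows "mag_laplacian H f (vertex (v, c)) = \<mu> * f (vertex (v, c)) \<longleftrightarrow>
    (\<Sum>c'\<in>cell_class (kind v) a s c. eigen_defect \<mu> f v c') = 0"
proof -
  let ?N = "cell_class (kind v) a s c"
  have "(\<Sum>c'\<in>?N. \<mu> * f (vertex (v, c'))) = of_nat (card ?N) * (\<mu> * f (vertex (v, c)))"
    using vertex_cell_class [OF v c] by simp
  then show ?thesis
    using card_cell_class_pos [OF c, of "kind v"]
    by (auto simp: eigen_defect_def mag_laplacian_vertex [OF v c] sum_subtractf field_simps)
qed

lemma is_eigenfunction_iff_defect_sums:
  "is_eigenfunction H \<mu> f \<longleftrightarrow> (\<forall>y. y \<notin> verts H \<longrightarrow> f y = 0) \<and>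
    (\<forall>v\<in>V. \<forall>c\<in>cells a s. (\<Sum>c'\<in>cell_class (kind v) a s c. eigen_defect \<mu> f v c') = 0)"
  by (auto simp: is_eigenfunction_def verts_contracted_union eigen_equation_vertex)

end

section \<open>Isospectrality and non-isomorphism\<close>

locale contracted_frame_union_pair =
  A: contracted_frame_union G V0 V1 A + B: contracted_frame_union G V0 V1 B
  for G :: "('v, 'e) mgraph" and V0 V1 :: "'v set" and A B :: "nat multiset" +
  assumes same_size: "size A = size B" and same_sum: "sum_mset A = sum_mset B"
begin

lemma same_s: "B.s = A.s"
  using same_size by (simp add: A.s_def B.s_def)

lemma card_inner_cells_eq: "card (inner_cells B.a A.s) = card (inner_cells A.a A.s)"
  using A.card_inner_cells_parts B.card_inner_cells_parts same_s same_sum by simp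

definition inner_match :: "cell \<Rightarrow> cell" where
  "inner_match = (SOME \<sigma>. bij_betw \<sigma> (inner_cells B.a A.s) (inner_cells A.a A.s))"

lemma inner_match_bij: "bij_betw inner_match (inner_cells B.a A.s) (inner_cells A.a A.s)"
proof -
  have "finite (inner_cells B.a A.s)" "finite (inner_cells A.a A.s)"
    using inner_cells_subset_cells finite_cells finite_subset by blast+
  then have "\<exists>\<sigma>. bij_betw \<sigma> (inner_cells B.a A.s) (inner_cells A.a A.s)"
    using card_inner_cells_eq finite_same_card_bij by blast
  then show ?thesis
    unfolding inner_match_def by (rule someI_ex)
qed

sublocale block_transfer A.a B.a A.s inner_match
proof
  show "\<And>i. i \<in> {1..A.s} \<Longrightarrow> 0 < A.a i" "\<And>i. i \<in> {1..A.s} \<Longrightarrow> 0 < B.a i"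
    using A.a_pos B.a_pos same_s by simp_all
  show "(\<Sum>i=1..A.s. A.a i) = (\<Sum>i=1..A.s. B.a i)"
    using A.sum_a B.sum_a same_s same_sum by simp
qed (rule inner_match_bij)

definition representative :: "'v union_vertex \<Rightarrow> 'v \<times> cell" where
  "representative y = (SOME p. p \<in> A.V \<times> cells B.a A.s \<and> B.vertex p = y)"

definition eigen_transfer :: "('v union_vertex \<Rightarrow> complex) \<Rightarrow> 'v union_vertex \<Rightarrow> complex" where
  "eigen_transfer f y =
    (if y \<in> verts B.H
     then transfer (\<lambda>c. f (A.vertex (fst (representative y), c))) (snd (representative y))
     else 0)"

lemma representative_vertex:
  assumes v: "v \<in> A.V" and c: "c \<in> cells B.a A.s"
  shows "fst (representative (B.vertex (v, c))) = v"
    and "snd (representative (B.vertex (v, c))) \<in> cell_class (A.kind v) B.a A.s c"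
proof -
  obtain v' c' where rep: "representative (B.vertex (v, c)) = (v', c')"
    by (cases "representative (B.vertex (v, c))")
  have "(v', c') \<in> A.V \<times> cells B.a A.s \<and> B.vertex (v', c') = B.vertex (v, c)"
    unfolding rep [symmetric] representative_def by (rule someI [of _ "(v, c)"]) (use v c in simp)
  then show "fst (representative (B.vertex (v, c))) = v"
    and "snd (representative (B.vertex (v, c))) \<in> cell_class (A.kind v) B.a A.s c"
    using B.vertex_eq_iff [of v c v' c'] v c same_s rep by auto
qed

lemma eigen_transfer_vertex:
  assumes v: "v \<in> A.V" and c: "c \<in> cells B.a A.s"
  shows "eigen_transfer f (B.vertex (v, c)) = transfer (\<lambda>c0. f (A.vertex (v, c0))) c"
proof -
  have "\<forall>c\<in>cells A.a A.s. \<forall>c'\<in>cell_class (A.kind v) A.a A.s c.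
      f (A.vertex (v, c')) = f (A.vertex (v, c))"
    using A.vertex_cell_class [OF v] by simp
  then have "\<forall>c\<in>cells B.a A.s. \<forall>c'\<in>cell_class (A.kind v) B.a A.s c.
      transfer (\<lambda>c0. f (A.vertex (v, c0))) c' = transfer (\<lambda>c0. f (A.vertex (v, c0))) c"
    by (rule transfer_class_const)
  then have "transfer (\<lambda>c0. f (A.vertex (v, c0))) (snd (representative (B.vertex (v, c)))) =
      transfer (\<lambda>c0. f (A.vertex (v, c0))) c"
    using c representative_vertex (2) [OF v c] by blast
  moreover have "B.vertex (v, c) \<in> verts B.H"
    using v c same_s by (simp add: B.verts_contracted_union)
  ultimately show ?thesis
    by (simp add: eigen_transfer_def representative_vertex [OF v c])
qed

lemma eigen_defect_transfer:
  assumes v: "v \<in> A.V" and c: "c \<in> cells B.a A.s"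
  shows "B.eigen_defect \<mu> (eigen_transfer f) v c = transfer (A.eigen_defect \<mu> f v) c"
proof -
  let ?x = "\<lambda>w c0. f (A.vertex (w, c0))"
  have "mag_laplacian G (\<lambda>w. eigen_transfer f (B.vertex (w, c))) v = mag_laplacian G (\<lambda>w. transfer (?x w) c) v"
    using c v eigen_transfer_vertex by (intro mag_laplacian_cong [OF A.mg]) auto
  also have "\<dots> = transfer (\<lambda>c0. mag_laplacian G (\<lambda>w. ?x w c0) v) c"
    by (rule mag_laplacian_cell_transfer [OF magnetic_graph_finite_out_edges [OF A.mg]])
  finally show ?thesis
    using cell_transfer_lin [of A.a B.a A.s inner_match 1 "\<lambda>c0. mag_laplacian G (\<lambda>w. ?x w c0) v" "- \<mu>" "?x v" c]
    by (simp add: A.eigen_defect_def B.eigen_defect_def eigen_transfer_vertex [OF v c])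
qed

lemma eigen_transfer_eigenfunction:
  assumes "is_eigenfunction A.H \<mu> f"
  shows "is_eigenfunction B.H \<mu> (eigen_transfer f)"
  unfolding B.is_eigenfunction_iff_defect_sums same_s
proof (intro conjI allI impI ballI)
  fix y
  assume "y \<notin> verts B.H"
  then show "eigen_transfer f y = 0"
    by (simp add: eigen_transfer_def)
next
  fix v c
  assume v: "v \<in> A.V" and c: "c \<in> cells B.a A.s"
  have "\<forall>c\<in>cells B.a A.s. (\<Sum>c'\<in>cell_class (A.kind v) B.a A.s c. transfer (A.eigen_defect \<mu> f v) c') = 0"
    using assms v by (intro transfer_class_sum_zero) (simp add: A.is_eigenfunction_iff_defect_sums)
  moreover have "(\<Sum>c'\<in>cell_class (A.kind v) B.a A.s c. B.eigen_defect \<mu> (eigen_transfer f) v c') =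
      (\<Sum>c'\<in>cell_class (A.kind v) B.a A.s c. transfer (A.eigen_defect \<mu> f v) c')"
    by (intro sum.cong refl eigen_defect_transfer [OF v]) (use cell_class_subset_cells [OF c] in blast)
  ultimately show "(\<Sum>c'\<in>cell_class (A.kind v) B.a A.s c. B.eigen_defect \<mu> (eigen_transfer f) v c') = 0"
    using c by simp
qed

lemma eigen_transfer_lincomb:
  "eigen_transfer (\<lambda>y. \<Sum>k<(n::nat). \<alpha> k * F k y) y = (\<Sum>k<n. \<alpha> k * eigen_transfer (F k) y)"
  by (simp add: eigen_transfer_def cell_transfer_lincomb)

lemma eigen_transfer_kernel:
  assumes f: "is_eigenfunction A.H \<mu> f" and zero: "\<forall>y. eigen_transfer f y = 0"
  shows "f y = 0"
proof (cases "y \<in> verts A.H")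
  case True
  then obtain v c where v: "v \<in> A.V" and c: "c \<in> cells A.a A.s" and y: "y = A.vertex (v, c)"
    by (auto simp: A.verts_contracted_union)
  have "\<forall>c'\<in>cells B.a A.s. transfer (\<lambda>c0. f (A.vertex (v, c0))) c' = 0"
    using zero eigen_transfer_vertex [OF v] by metis
  then show ?thesis
    using transfer_eq_zero_imp c y by blast
next
  case False
  then show ?thesis
    using f by (simp add: is_eigenfunction_def)
qed

lemma indep_eigen_counts_subset: "indep_eigen_counts A.H \<mu> \<subseteq> indep_eigen_counts B.H \<mu>"
  using eigen_transfer_eigenfunction eigen_transfer_lincomb eigen_transfer_kernel
  by (rule indep_eigen_counts_mono)

end

lemma contracted_unions_isospectral:
  assumes "magnetic_graph G" and "V0 \<subseteq> verts G" and "V1 \<subseteq> V0"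
    and "0 \<notin># A" and "0 \<notin># B" and "size A = size B" and "sum_mset A = sum_mset B"
  shows "isospectral (contracted_union G V0 V1 A) (contracted_union G V0 V1 B)"
proof -
  interpret AB: contracted_frame_union_pair G V0 V1 A B
    using assms by unfold_locales
  interpret BA: contracted_frame_union_pair G V0 V1 B A
    using assms by unfold_locales simp_all
  have "indep_eigen_counts (contracted_union G V0 V1 A) \<mu> = indep_eigen_counts (contracted_union G V0 V1 B) \<mu>"
    for \<mu>
    using AB.indep_eigen_counts_subset BA.indep_eigen_counts_subset by (rule subset_antisym)
  then show ?thesis
    unfolding isospectral_def eig_mult_eq_Max by simp
qed

lemma contracted_unions_isomorphic_imp_eq:
  assumes "magnetic_graph G" and "V0 \<subseteq> verts G" and "V1 \<subset> V0"
    and "0 \<notin># A" and "0 \<notin># B" and "A \<noteq> {#}" and "sum_mset A = sum_mset B"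
    and iso: "mg_isomorphic (contracted_union G V0 V1 A) (contracted_union G V0 V1 B)"
  shows "A = B"
proof -
  interpret A: contracted_frame_union G V0 V1 A
    using assms by unfold_locales auto
  interpret B: contracted_frame_union G V0 V1 B
    using assms by unfold_locales auto
  define d where "d = (\<lambda>v. card (out_edges G v))"
  have "B \<noteq> {#}"
    using assms(4,6,7) by (metis multiset_nonemptyE sum_mset.empty sum_mset_0_iff)
  have "(\<Sum>n\<in>#scaled_copies (V0 - V1) d A. F n) = (\<Sum>n\<in>#scaled_copies (V0 - V1) d B. F n)"
    for F :: "nat \<Rightarrow> real"
  proof -
    have "degree_stat (contracted_union G V0 V1 A) F = degree_stat (contracted_union G V0 V1 B) F"
      using mg_isomorphic_degree_stat [OF iso A.src_in_verts_contracted_union] .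
    then show ?thesis
      using A.degree_stat_contracted_union [OF \<open>A \<noteq> {#}\<close>, of F, unfolded assms(7)]
        B.degree_stat_contracted_union [OF \<open>B \<noteq> {#}\<close>, of F]
      unfolding d_def by simp
  qed
  then have "scaled_copies (V0 - V1) d A = scaled_copies (V0 - V1) d B"
    by (rule multiset_eq_if_sum_mset_eq)
  moreover have "finite (V0 - V1)"
    using assms(1,2) finite_subset by (auto simp: magnetic_graph_def)
  moreover have "V0 - V1 \<noteq> {}"
    using assms(3) by blast
  moreover have "\<forall>v\<in>V0 - V1. d v > 0"
    using assms(1,2) by (auto simp: d_def magnetic_graph_def out_edges_def card_gt_0_iff)
  ultimately show ?thesis
    using scaled_copies_inj by blast
qed

theorem theorem5p8:
  fixes G :: "('v, 'e) mgraph" and V0 V1 :: "'v set"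
    and A B :: "nat multiset" and r s :: nat
  assumes "magnetic_graph G"
    and "V0 \<subseteq> verts G" and "V1 \<subset> V0"
    and "r \<ge> 4"
    and "is_partition s r A" and "is_partition s r B" and "A \<noteq> B"
  shows "isospectral (contracted_union G V0 V1 A) (contracted_union G V0 V1 B) \<and>
         \<not> mg_isomorphic (contracted_union G V0 V1 A) (contracted_union G V0 V1 B)"
proof -
  have A: "0 \<notin># A" "size A = s" "sum_mset A = r" and B: "0 \<notin># B" "size B = s" "sum_mset B = r"
    using assms(5,6) by (auto simp: is_partition_def)
  \<comment> \<open>The bound r \<ge> 4 only serves to make the partitions nonempty.\<close>
  have "A \<noteq> {#}"
    using A(3) assms(4) by auto
  show ?thesis
    using contracted_unions_isospectral [of G V0 V1 A B] contracted_unions_isomorphic_imp_eq [of G V0 V1 A B]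
      assms(1-3,7) A B \<open>A \<noteq> {#}\<close> by auto
qed

end
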